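(* Let $n\ge3$ and $q\ge2$ with $q-1\le\lfloor n/2\rfloor$, and let $m_1<\cdots<m_t$ be the minimal monomial generators of $I(C_n)^{[q-1]}$, listed in the order described in the context. Then for all $j<i$, either $(m_j:m_i)\subseteq (I(C_n)^{[q]}:m_i)$, or there exists $r<i$ such that $(m_r:m_i)$ is generated by a single variable and $(m_j:m_i)\subseteq (m_r:m_i)$.
   Context: $C_n$ is the cycle on $x_1,\dots,x_n$ with edges $\{x_i,x_{i+1}\}$ ($1\le i\le n-1$) and $\{x_1,x_n\}$; $I(C_n)$ is its edge ideal in $\mathbb{K}[x_1,\dots,x_n]$, and $I(C_n)^{[q]}$ is the ideal generated by the monomials $\prod_{v\in e_1\cup\dots\cup e_q}v$ for matchings $\{e_1,\dots,e_q\}$ of $C_n$ (zero if no such matching exists). For monomial ideals/monomials, $(I:f)=\{g: gf\in I\}$. Ordering: edges are ordered $\{x_1,x_2\}<\{x_2,x_3\}<\cdots<\{x_{n-1},x_n\}<\{x_1,x_n\}$. For a matching $M$ of size $q-1$, let $e(M)$ be the sequence of its edges in increasing order; matchings are compared by the lexicographic order on these sequences. Each minimal generator $m$ of $I(C_n)^{[q-1]}$ is associated with the lexicographically smallest matching $M$ whose product of covered vertices is $m$, and generators are ordered by the lexicographic order of the associated sequences $e(M)$. *)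

theory Defs
  imports "HOL-Library.Multiset"
begin

text \<open>Monomials in K[x_1,...,x_n] are modelled by multisets of variable indices
 (exponent vectors). A monomial ideal is modelled by the set of monomials it contains;
 for monomial ideals, containment and colons by monomials are determined by these sets.\<close>

definition monoms :: "nat \<Rightarrow> nat multiset set" where
  "monoms n = {u. set_mset u \<subseteq> {1..n}}"

definition mideal :: "nat \<Rightarrow> nat multiset set \<Rightarrow> nat multiset set" where
  "mideal n G = {u \<in> monoms n. \<exists>g\<in>G. g \<subseteq># u}"

definition mcolon :: "nat \<Rightarrow> nat multiset set \<Rightarrow> nat multiset \<Rightarrow> nat multiset set" where
  "mcolon n I f = {g \<in> monoms n. g + f \<in> I}"

definition mingens :: "nat multiset set \<Rightarrow> nat multiset set" where
  "mingens J = {u \<in> J. \<forall>v\<in>J. v \<subseteq># u \<longrightarrow> v = u}"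

text \<open>Edges of C_n indexed 1..n: edge i = {x_i,x_(i+1)} for i<n, edge n = {x_1,x_n};
 the edge order is the order of the indices.\<close>
definition cedge :: "nat \<Rightarrow> nat \<Rightarrow> nat set" where
  "cedge n i = (if i < n then {i, i+1} else {1, n})"

definition is_matching :: "nat \<Rightarrow> nat set \<Rightarrow> bool" where
  "is_matching n M \<longleftrightarrow> M \<subseteq> {1..n} \<and>
     (\<forall>i\<in>M. \<forall>j\<in>M. i \<noteq> j \<longrightarrow> cedge n i \<inter> cedge n j = {})"

definition mprod :: "nat \<Rightarrow> nat set \<Rightarrow> nat multiset" where
  "mprod n M = mset_set (\<Union>i\<in>M. cedge n i)"

definition matchings :: "nat \<Rightarrow> nat \<Rightarrow> nat set set" where
  "matchings n q = {M. is_matching n M \<and> card M = q}"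

text \<open>Monomials of the squarefree power I(C_n)^[q] (the empty set if it is the zero ideal).\<close>
definition sqpow :: "nat \<Rightarrow> nat \<Rightarrow> nat multiset set" where
  "sqpow n q = mideal n (mprod n ` matchings n q)"

definition lexless :: "nat list \<Rightarrow> nat list \<Rightarrow> bool" where
  "lexless xs ys \<longleftrightarrow> (xs, ys) \<in> lexord {(a, b). a < b}"

text \<open>Sequence e(M) of the lexicographically smallest matching of size q with product m.\<close>
definition gkey :: "nat \<Rightarrow> nat \<Rightarrow> nat multiset \<Rightarrow> nat list" where
  "gkey n q m = (THE L. L \<in> {sorted_list_of_set M | M. M \<in> matchings n q \<and> mprod n M = m} \<and>
     (\<forall>L'\<in>{sorted_list_of_set M | M. M \<in> matchings n q \<and> mprod n M = m}.
        L' \<noteq> L \<longrightarrow> lexless L L'))"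

end

theory Submission
  imports Defs "HOL-Library.List_Lexorder"
begin

text \<open>
  Write \<open>m\<^sub>i\<close> and \<open>m\<^sub>j\<close> as the vertex products of their lexicographically least matchings
  \<open>M\<close> and \<open>N\<close> with \<open>q - 1\<close> edges, so that \<open>e(N) < e(M)\<close>. The symmetric difference of \<open>M\<close> and \<open>N\<close> is a disjoint union of
  alternating paths of \<open>C\<^sub>n\<close>; it is not all of \<open>C\<^sub>n\<close> because \<open>m\<^sub>i \<noteq> m\<^sub>j\<close>, and its
  least edge \<open>a\<close> lies in \<open>N\<close>. Exchanging \<open>M\<close> and \<open>N\<close> along the path \<open>P\<close> through \<open>a\<close>
  changes the covered vertices only at the two ends of \<open>P\<close>. If both end edges of \<open>P\<close> lie in
  \<open>N\<close> (in \<open>M\<close>), the exchange turns \<open>M\<close> (\<open>N\<close>) into a matching with \<open>q\<close> edges covering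
  only vertices of \<open>m\<^sub>i m\<^sub>j\<close>, whence \<open>(m\<^sub>j : m\<^sub>i) \<subseteq> (I(C\<^sub>n)\<^bsup>[q]\<^esup> : m\<^sub>i)\<close>. Otherwise it
  turns \<open>M\<close> into a matching \<open>M'\<close> with \<open>q - 1\<close> edges and \<open>e(M') < e(M)\<close>, as \<open>a\<close> is their
  first difference, whose product \<open>m\<^sub>r\<close> differs from \<open>m\<^sub>i\<close> by one variable \<open>x\<^sub>w\<close> dividing
  \<open>m\<^sub>j\<close>: then \<open>r < i\<close> and \<open>(m\<^sub>j : m\<^sub>i) \<subseteq> (m\<^sub>r : m\<^sub>i) = (x\<^sub>w)\<close>.
\<close>

section \<open>Cyclic indexing\<close>

text \<open>Vertices and edges of \<open>C\<^sub>n\<close> are both indexed by \<open>1..n\<close>. Reading indices through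
  \<open>cyc n x = x mod n + 1\<close> makes the incidence uniform: vertex \<open>cyc n (Suc x)\<close> lies exactly on
  the edges \<open>cyc n x\<close> and \<open>cyc n (Suc x)\<close>.\<close>

definition cyc :: "nat \<Rightarrow> nat \<Rightarrow> nat" where
  "cyc n x = x mod n + 1"

lemma cyc_in_range: "0 < n \<Longrightarrow> cyc n x \<in> {1..n}"
  by (simp add: cyc_def Suc_leI)

lemma cyc_pred: "v \<in> {1..n} \<Longrightarrow> cyc n (v - 1) = v"
  by (auto simp: cyc_def)

lemma cyc_add_self [simp]: "cyc n (x + n) = cyc n x"
  by (simp add: cyc_def)

lemma cyc_Suc_eq_iff: "cyc n (Suc x) = cyc n (Suc y) \<longleftrightarrow> cyc n x = cyc n y"
  by (simp add: cyc_def mod_Suc)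

lemma cyc_Suc_neq: "2 \<le> n \<Longrightarrow> cyc n (Suc x) \<noteq> cyc n x"
  by (simp add: cyc_def mod_Suc)

lemma cyc_add_inj:
  assumes "s < n" "t < n" "cyc n (p + s) = cyc n (p + t)"
  shows "s = t"
proof -
  have "s = t" if "s \<le> t" "t < n" "(p + s) mod n = (p + t) mod n" for s t
  proof -
    have "n dvd t - s" using that mod_eq_dvd_iff_nat[of "p + s" "p + t" n] by simp
    moreover have "t - s < n" using that by linarith
    ultimately have "t - s = 0" using nat_dvd_not_less by blast
    with that show ?thesis by simp
  qed
  moreover have "(p + s) mod n = (p + t) mod n" using assms(3) by (simp add: cyc_def)
  ultimately show ?thesis using assms(1,2) by (metis nat_le_linear)
qed

lemma cedge_cyc:
  assumes "2 \<le> n"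
  shows "cedge n (cyc n x) = {cyc n x, cyc n (Suc x)}"
proof -
  have "x mod n < n" using assms by simp
  then consider "Suc (x mod n) < n" | "Suc (x mod n) = n" by linarith
  then show ?thesis using assms by cases (auto simp: cedge_def cyc_def mod_Suc)
qed

lemma cyc_Suc_mem_cedge_iff:
  assumes "2 \<le> n" "i \<in> {1..n}"
  shows "cyc n (Suc x) \<in> cedge n i \<longleftrightarrow> i = cyc n x \<or> i = cyc n (Suc x)"
proof -
  have "cedge n i = {i, cyc n i}"
    using cedge_cyc[OF assms(1), of "i - 1"] cyc_pred[OF assms(2)] assms(2) by simp
  then show ?thesis using cyc_Suc_eq_iff[of n x "i - 1"] cyc_pred[OF assms(2)] assms(2) by auto
qed

section \<open>Matchings and their covered vertices\<close>

definition covered :: "nat \<Rightarrow> nat set \<Rightarrow> nat set" where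
  "covered n M = (\<Union>i\<in>M. cedge n i)"

lemma mprod_eq_mset_set_covered: "mprod n M = mset_set (covered n M)"
  by (simp add: mprod_def covered_def)

lemma is_matching_subset: "is_matching n M \<Longrightarrow> M \<subseteq> {1..n}"
  by (simp add: is_matching_def)

lemma covered_subset: "M \<subseteq> {1..n} \<Longrightarrow> covered n M \<subseteq> {1..n}"
  by (auto simp: covered_def cedge_def)

lemma finite_covered: "is_matching n M \<Longrightarrow> finite (covered n M)"
  by (meson covered_subset finite_atLeastAtMost finite_subset is_matching_subset)

lemma card_covered:
  assumes "is_matching n M" "2 \<le> n"
  shows "card (covered n M) = 2 * card M"
proof -
  have M: "M \<subseteq> {1..n}" using assms(1) by (rule is_matching_subset)
  then have "finite M" using finite_subset by blast
  then have "card (covered n M) = (\<Sum>i\<in>M. card (cedge n i))"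
    unfolding covered_def using assms(1)
    by (intro card_UN_disjoint) (auto simp: cedge_def is_matching_def)
  also have "\<dots> = (\<Sum>i\<in>M. 2)"
    using M assms(2) by (intro sum.cong) (auto simp: cedge_def)
  finally show ?thesis by simp
qed

lemma cedge_disjoint_sym_diff_inter:
  assumes "is_matching n M" "is_matching n N" "e \<in> sym_diff M N" "h \<in> M \<inter> N"
  shows "cedge n e \<inter> cedge n h = {}"
  using assms unfolding is_matching_def by (metis Diff_iff Int_iff UnE)

lemma sym_diff_adjacent_alternate:
  assumes "is_matching n M" "is_matching n N" "e \<in> sym_diff M N" "f \<in> sym_diff M N"
    and "e \<noteq> f" "v \<in> cedge n e" "v \<in> cedge n f"
  shows "(e \<in> M \<and> f \<in> N) \<or> (e \<in> N \<and> f \<in> M)"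
  using assms unfolding is_matching_def by blast

lemma covered_iff_at_sym_diff_end:
  assumes M: "is_matching n M" and N: "is_matching n N"
    and e: "e \<in> sym_diff M N" "v \<in> cedge n e"
    and unique: "\<And>h. h \<in> sym_diff M N \<Longrightarrow> v \<in> cedge n h \<Longrightarrow> h = e"
    and X: "X \<subseteq> M \<union> N"
  shows "v \<in> covered n X \<longleftrightarrow> e \<in> X"
proof -
  have "h = e" if "h \<in> M \<union> N" "v \<in> cedge n h" for h
  proof (cases "h \<in> M \<inter> N")
    case True
    then show ?thesis using cedge_disjoint_sym_diff_inter[OF M N e(1) True] e(2) that(2) by blast
  next
    case False
    then show ?thesis using unique that by blast
  qed
  then show ?thesis using X e(2) unfolding covered_def by blast
qed

lemma covered_eq_if_sym_diff_full:
  assumes "2 \<le> n" and M: "is_matching n M" and N: "is_matching n N"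
    and full: "{1..n} \<subseteq> sym_diff M N"
  shows "covered n M = covered n N"
proof -
  have "v \<in> covered n M \<and> v \<in> covered n N" if v: "v \<in> {1..n}" for v
  proof -
    define y where "y = v + n - 2"
    have "1 \<le> v" using v by simp
    then have "Suc y = v - 1 + n" using assms(1) unfolding y_def by linarith
    then have vy: "v = cyc n (Suc y)" using cyc_pred[OF v] by simp
    have edges: "cyc n y \<in> sym_diff M N" "cyc n (Suc y) \<in> sym_diff M N"
      using full cyc_in_range[of n] assms(1) by (simp_all add: subset_iff)
    have "v \<in> cedge n (cyc n y)" "v \<in> cedge n (cyc n (Suc y))"
      using vy cedge_cyc[OF assms(1)] by auto
    with sym_diff_adjacent_alternate[OF M N edges cyc_Suc_neq[OF assms(1), symmetric]]
    show ?thesis unfolding covered_def by blast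
  qed
  then show ?thesis
    using covered_subset[OF is_matching_subset[OF M]] covered_subset[OF is_matching_subset[OF N]] by blast
qed

section \<open>Exchanging two matchings along a maximal arc\<close>

definition exchange :: "'a set \<Rightarrow> 'a set \<Rightarrow> 'a set \<Rightarrow> 'a set" where
  "exchange M N P = (M - P) \<union> (N \<inter> P)"

lemma is_matching_exchange:
  assumes M: "is_matching n M" and N: "is_matching n N"
    and closed: "\<And>e f. e \<in> sym_diff M N \<Longrightarrow> f \<in> P \<Longrightarrow>
      cedge n e \<inter> cedge n f \<noteq> {} \<Longrightarrow> e \<in> P"
  shows "is_matching n (exchange M N P)"
proof -
  have disj: "cedge n e \<inter> cedge n f = {}" if "e \<in> M - P" "f \<in> N \<inter> P" "e \<noteq> f" for e f
  proof (cases "e \<in> N")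
    case True
    then show ?thesis using N that unfolding is_matching_def by blast
  next
    case False
    then show ?thesis using closed[of e f] that by blast
  qed
  show ?thesis unfolding is_matching_def
  proof (intro conjI ballI impI)
    show "exchange M N P \<subseteq> {1..n}" using M N by (auto simp: exchange_def is_matching_def)
    fix e f assume ef: "e \<in> exchange M N P" "f \<in> exchange M N P" "e \<noteq> f"
    then consider "e \<in> M" "f \<in> M" | "e \<in> N" "f \<in> N" | "e \<in> M - P" "f \<in> N \<inter> P"
      | "f \<in> M - P" "e \<in> N \<inter> P"
      unfolding exchange_def by blast
    then show "cedge n e \<inter> cedge n f = {}"
      using M N disj[of e f] disj[of f e] ef(3) unfolding is_matching_def by cases blast+
  qed
qed

lemma covered_exchange_subset: "covered n (exchange M N P) \<subseteq> covered n M \<union> covered n N"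
  by (auto simp: covered_def exchange_def)

text \<open>\<open>arc n p L\<close> is the path formed by the edges \<open>cyc n (p + 1), ..., cyc n (p + L)\<close>;
  it runs from vertex \<open>cyc n (Suc p)\<close> to vertex \<open>cyc n (p + Suc L)\<close>.\<close>

definition arc :: "nat \<Rightarrow> nat \<Rightarrow> nat \<Rightarrow> nat set" where
  "arc n p L = (\<lambda>t. cyc n (p + t)) ` {1..L}"

definition is_maximal_arc :: "nat \<Rightarrow> nat set \<Rightarrow> nat \<Rightarrow> nat \<Rightarrow> bool" where
  "is_maximal_arc n D p L \<longleftrightarrow>
     0 < L \<and> arc n p L \<subseteq> D \<and> cyc n p \<notin> D \<and> cyc n (p + Suc L) \<notin> D"

lemma cyc_mem_arc: "t \<in> {1..L} \<Longrightarrow> cyc n (p + t) \<in> arc n p L"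
  by (simp add: arc_def)

lemma maximal_arc_length_less:
  assumes "is_maximal_arc n D p L" "0 < n"
  shows "L < n"
proof (rule ccontr)
  assume "\<not> L < n"
  then have "cyc n (p + n) \<in> arc n p L" unfolding arc_def using assms(2) by (intro imageI) auto
  then show False using assms(1) unfolding is_maximal_arc_def by auto
qed

lemma maximal_arc_ends_distinct:
  assumes "is_maximal_arc n D p L" "0 < n"
  shows "cyc n (Suc p) \<noteq> cyc n (p + Suc L)"
  using cyc_add_inj[of 0 n L "Suc p"] maximal_arc_length_less[OF assms] assms(1)
  by (auto simp: is_maximal_arc_def)

lemma maximal_arc_edge_at_vertex:
  assumes "2 \<le> n" "D \<subseteq> {1..n}" "is_maximal_arc n D p L"
    and "e \<in> D" "r \<le> L" "cyc n (p + Suc r) \<in> cedge n e"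
  shows "(0 < r \<and> e = cyc n (p + r)) \<or> (r < L \<and> e = cyc n (p + Suc r))"
proof -
  have e: "e = cyc n (p + r) \<or> e = cyc n (p + Suc r)"
    using cyc_Suc_mem_cedge_iff[OF assms(1), of e "p + r"] assms(2,4,6) by auto
  have ends: "e \<noteq> cyc n p" "e \<noteq> cyc n (p + Suc L)"
    using assms(3,4) unfolding is_maximal_arc_def by auto
  show ?thesis
  proof (cases "e = cyc n (p + r)")
    case True
    then have "r \<noteq> 0" using ends(1) by (metis add.right_neutral)
    then show ?thesis using True by simp
  next
    case False
    then have "e = cyc n (p + Suc r)" using e by blast
    moreover have "r \<noteq> L" using calculation ends(2) by blast
    ultimately show ?thesis using assms(5) by simp
  qed
qed

lemma vertex_of_arc_edge:
  assumes "2 \<le> n" "v \<in> covered n (arc n p L)"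
  obtains r where "r \<le> L" "v = cyc n (p + Suc r)"
proof -
  from assms(2) obtain t where t: "t \<in> {1..L}" "v \<in> cedge n (cyc n (p + t))"
    unfolding covered_def arc_def by blast
  moreover have "t - 1 \<le> L" "t \<le> L" "p + Suc (t - 1) = p + t" using t(1) by auto
  ultimately show ?thesis using that[of "t - 1"] that[of t] cedge_cyc[OF assms(1)] by auto
qed

lemma cyc_add_surj:
  assumes "0 < n" "v \<in> {1..n}"
  obtains d where "d < n" "cyc n (x + d) = v"
proof -
  define d where "d = (v - 1 + n - x mod n) mod n"
  have "(x + d) mod n = (x mod n + (v - 1 + n - x mod n)) mod n"
    unfolding d_def by (simp add: mod_add_right_eq mod_add_left_eq)
  also have "x mod n + (v - 1 + n - x mod n) = v - 1 + n"
    using mod_less_divisor[OF assms(1), of x] by linarith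
  moreover have "v - 1 < n" using assms(2) by auto
  ultimately have "cyc n (x + d) = v" using assms(2) by (simp add: cyc_def)
  moreover have "d < n" unfolding d_def using assms(1) by simp
  ultimately show ?thesis using that by blast
qed

lemma run_ending_at:
  assumes "0 < n" "D \<subseteq> {1..n}" "a \<in> D" "x \<in> {1..n}" "x \<notin> D"
  obtains p t
  where "0 < t" "cyc n p \<notin> D" "cyc n (p + t) = a" "\<forall>s\<in>{1..t}. cyc n (p + s) \<in> D"
proof -
  define x0 where "x0 = x - 1"
  have x0: "cyc n x0 = x" unfolding x0_def using assms(4) by (rule cyc_pred)
  obtain d where d: "d < n" "cyc n (x0 + d) = a" using cyc_add_surj assms(1-3) by blast
  define S where "S = {s. s \<le> d \<and> cyc n (x0 + s) \<notin> D}"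
  have "finite S" "0 \<in> S" unfolding S_def using x0 assms(5) by auto
  define s0 where "s0 = Max S"
  have s0: "s0 \<in> S" "\<And>s. s \<in> S \<Longrightarrow> s \<le> s0"
    unfolding s0_def using \<open>finite S\<close> \<open>0 \<in> S\<close> Max_in by auto
  have "s0 \<noteq> d" using s0(1) d(2) assms(3) unfolding S_def by auto
  then have "s0 < d" using s0(1) unfolding S_def by simp
  have "cyc n (x0 + s0 + s) \<in> D" if "s \<in> {1..d - s0}" for s
  proof (rule ccontr)
    assume "cyc n (x0 + s0 + s) \<notin> D"
    moreover have "s0 + s \<le> d" using that \<open>s0 < d\<close> by auto
    ultimately have "s0 + s \<in> S" unfolding S_def by (simp add: add.assoc)
    then show False using s0(2) that by fastforce
  qed
  moreover have "cyc n (x0 + s0 + (d - s0)) = a" using d(2) \<open>s0 < d\<close> by simp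
  moreover have "cyc n (x0 + s0) \<notin> D" using s0(1) unfolding S_def by simp
  ultimately show ?thesis using that[of "d - s0" "x0 + s0"] \<open>s0 < d\<close> by auto
qed

lemma maximal_arc_extending_run:
  assumes "0 < n" "0 < t" "cyc n p \<notin> D" "\<forall>s\<in>{1..t}. cyc n (p + s) \<in> D"
  obtains L where "t \<le> L" "is_maximal_arc n D p L"
proof -
  define L where "L = (LEAST l. cyc n (p + Suc l) \<notin> D)"
  have "cyc n (p + Suc (n - 1)) \<notin> D" using assms(1,3) by simp
  then have end_out: "cyc n (p + Suc L) \<notin> D" unfolding L_def by (rule LeastI)
  have before_in: "cyc n (p + Suc l) \<in> D" if "l < L" for l
    using not_less_Least[of l "\<lambda>l. cyc n (p + Suc l) \<notin> D"] that unfolding L_def by blast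
  have "t \<le> L"
  proof (rule ccontr)
    assume "\<not> t \<le> L"
    then have "Suc L \<in> {1..t}" by simp
    then show False using assms(4) end_out by blast
  qed
  moreover have "arc n p L \<subseteq> D"
  proof
    fix e assume "e \<in> arc n p L"
    then obtain s where "s \<in> {1..L}" "e = cyc n (p + s)" unfolding arc_def by blast
    then show "e \<in> D" using before_in[of "s - 1"] by (cases s) auto
  qed
  ultimately show ?thesis using that assms(2,3) end_out by (simp add: is_maximal_arc_def)
qed

lemma maximal_arc_through:
  assumes "0 < n" "D \<subseteq> {1..n}" "a \<in> D" "x \<in> {1..n}" "x \<notin> D"
  obtains p L where "is_maximal_arc n D p L" "a \<in> arc n p L"
proof -
  obtain p t
    where run: "0 < t" "cyc n p \<notin> D" "cyc n (p + t) = a" "\<forall>s\<in>{1..t}. cyc n (p + s) \<in> D"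
    using run_ending_at[OF assms] by blast
  then obtain L where "t \<le> L" "is_maximal_arc n D p L"
    using maximal_arc_extending_run[OF assms(1)] by blast
  moreover have "a \<in> arc n p L" using run(1,3) \<open>t \<le> L\<close> cyc_mem_arc[of t L n p] by simp
  ultimately show ?thesis using that by blast
qed

context
  fixes n M N p L
  assumes n: "2 \<le> n" and M: "is_matching n M" and N: "is_matching n N"
    and A: "is_maximal_arc n (sym_diff M N) p L"
begin

private lemma sym_diff_subset: "sym_diff M N \<subseteq> {1..n}"
  using is_matching_subset[OF M] is_matching_subset[OF N] by blast

private lemma arc_edge_in: "t \<in> {1..L} \<Longrightarrow> cyc n (p + t) \<in> sym_diff M N"
  using A unfolding is_maximal_arc_def arc_def by blast

lemma is_matching_exchange_maximal_arc: "is_matching n (exchange M N (arc n p L))"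
proof (rule is_matching_exchange[OF M N])
  fix e f assume e: "e \<in> sym_diff M N" and f: "f \<in> arc n p L" and "cedge n e \<inter> cedge n f \<noteq> {}"
  then obtain v where "v \<in> cedge n e" "v \<in> covered n (arc n p L)" unfolding covered_def by blast
  then obtain r where "r \<le> L" "cyc n (p + Suc r) \<in> cedge n e"
    using vertex_of_arc_edge[OF n] by metis
  from maximal_arc_edge_at_vertex[OF n sym_diff_subset A e this]
  show "e \<in> arc n p L"
    using \<open>r \<le> L\<close> cyc_mem_arc[where t = r] cyc_mem_arc[where t = "Suc r"] by auto
qed

lemma covered_exchange_maximal_arc_inner:
  assumes "v \<noteq> cyc n (Suc p)" "v \<noteq> cyc n (p + Suc L)"
  shows "v \<in> covered n (exchange M N (arc n p L)) \<longleftrightarrow> v \<in> covered n M"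
proof (cases "v \<in> covered n (arc n p L)")
  case False
  then show ?thesis by (auto simp: covered_def exchange_def)
next
  case True
  then obtain r where r: "r \<le> L" "v = cyc n (p + Suc r)"
    using vertex_of_arc_edge[OF n] by metis
  have "r \<noteq> 0"
  proof
    assume "r = 0"
    then show False using assms(1) r(2) by simp
  qed
  moreover have "r \<noteq> L" using assms(2) r(2) by auto
  ultimately have r': "r \<in> {1..L}" "Suc r \<in> {1..L}" using r(1) by auto
  let ?e = "cyc n (p + r)" and ?f = "cyc n (p + Suc r)"
  have ne: "?e \<noteq> ?f" using cyc_Suc_neq[OF n, of "p + r"] by simp
  have v: "v \<in> cedge n ?e" "v \<in> cedge n ?f" using r(2) cedge_cyc[OF n] by auto
  have "(?e \<in> M \<and> ?f \<in> N) \<or> (?e \<in> N \<and> ?f \<in> M)"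
    by (rule sym_diff_adjacent_alternate[OF M N arc_edge_in[OF r'(1)] arc_edge_in[OF r'(2)] ne v])
  then show ?thesis using cyc_mem_arc[OF r'(1)] cyc_mem_arc[OF r'(2)] v
    unfolding covered_def exchange_def by blast
qed

lemma covered_maximal_arc_start_iff:
  assumes "X \<subseteq> M \<union> N"
  shows "cyc n (Suc p) \<in> covered n X \<longleftrightarrow> cyc n (Suc p) \<in> X"
proof (rule covered_iff_at_sym_diff_end[OF M N _ _ _ assms])
  show "cyc n (Suc p) \<in> sym_diff M N" using arc_edge_in[of 1] A by (simp add: is_maximal_arc_def)
  show "cyc n (Suc p) \<in> cedge n (cyc n (Suc p))" using cedge_cyc[OF n] by simp
  fix h assume "h \<in> sym_diff M N" "cyc n (Suc p) \<in> cedge n h"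
  then show "h = cyc n (Suc p)"
    using maximal_arc_edge_at_vertex[OF n sym_diff_subset A, of h 0] by simp
qed

lemma covered_maximal_arc_end_iff:
  assumes "X \<subseteq> M \<union> N"
  shows "cyc n (p + Suc L) \<in> covered n X \<longleftrightarrow> cyc n (p + L) \<in> X"
proof (rule covered_iff_at_sym_diff_end[OF M N _ _ _ assms])
  show "cyc n (p + L) \<in> sym_diff M N" using arc_edge_in[of L] A by (simp add: is_maximal_arc_def)
  show "cyc n (p + Suc L) \<in> cedge n (cyc n (p + L))" using cedge_cyc[OF n] by simp
  fix h assume "h \<in> sym_diff M N" "cyc n (p + Suc L) \<in> cedge n h"
  then show "h = cyc n (p + L)"
    using maximal_arc_edge_at_vertex[OF n sym_diff_subset A, of h L] by simp
qed

lemma covered_maximal_arc_ends_iff: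
  "cyc n (Suc p) \<in> covered n M \<longleftrightarrow> cyc n (Suc p) \<notin> covered n N"
  "cyc n (p + Suc L) \<in> covered n M \<longleftrightarrow> cyc n (p + Suc L) \<notin> covered n N"
proof -
  have "cyc n (Suc p) \<in> sym_diff M N" "cyc n (p + L) \<in> sym_diff M N"
    using A cyc_mem_arc[of 1 L n p] cyc_mem_arc[of L L n p] by (auto simp: is_maximal_arc_def)
  then show "cyc n (Suc p) \<in> covered n M \<longleftrightarrow> cyc n (Suc p) \<notin> covered n N"
    "cyc n (p + Suc L) \<in> covered n M \<longleftrightarrow> cyc n (p + Suc L) \<notin> covered n N"
    using covered_maximal_arc_start_iff covered_maximal_arc_end_iff by auto
qed

lemma covered_exchange_maximal_arc:
  "covered n (exchange M N (arc n p L)) =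
     (covered n M - {cyc n (Suc p), cyc n (p + Suc L)})
     \<union> ({cyc n (Suc p), cyc n (p + Suc L)} \<inter> covered n N)"
  (is "?lhs = ?rhs")
proof -
  have sub: "exchange M N (arc n p L) \<subseteq> M \<union> N" "N \<subseteq> M \<union> N" by (auto simp: exchange_def)
  have in_arc: "cyc n (Suc p) \<in> arc n p L" "cyc n (p + L) \<in> arc n p L"
    using A cyc_mem_arc[of 1 L n p] cyc_mem_arc[of L L n p] by (auto simp: is_maximal_arc_def)
  show ?thesis
  proof (rule set_eqI)
    fix v
    consider "v = cyc n (Suc p)" | "v = cyc n (p + Suc L)"
      | "v \<noteq> cyc n (Suc p)" "v \<noteq> cyc n (p + Suc L)" by blast
    then show "v \<in> ?lhs \<longleftrightarrow> v \<in> ?rhs"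
    proof cases
      case 1
      then show ?thesis using covered_maximal_arc_start_iff[OF sub(1)]
          covered_maximal_arc_start_iff[OF sub(2)] in_arc(1)
        by (simp add: exchange_def)
    next
      case 2
      then show ?thesis using covered_maximal_arc_end_iff[OF sub(1)]
          covered_maximal_arc_end_iff[OF sub(2)] in_arc(2)
        by (simp add: exchange_def)
    next
      case 3
      then show ?thesis using covered_exchange_maximal_arc_inner by simp
    qed
  qed
qed

lemma exchange_maximal_arc_grows:
  assumes "{cyc n (Suc p), cyc n (p + Suc L)} \<subseteq> covered n N"
  shows "exchange M N (arc n p L) \<in> matchings n (Suc (card M))"
proof -
  let ?M' = "exchange M N (arc n p L)" and ?u = "cyc n (Suc p)" and ?z = "cyc n (p + Suc L)"
  have "?u \<notin> covered n M" "?z \<notin> covered n M"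
    using assms covered_maximal_arc_ends_iff by auto
  moreover have "covered n ?M' = insert ?u (insert ?z (covered n M))"
    using assms covered_exchange_maximal_arc by auto
  moreover have "?u \<noteq> ?z" using maximal_arc_ends_distinct[OF A] n by simp
  ultimately have "card (covered n ?M') = card (covered n M) + 2"
    using finite_covered[OF M] by simp
  then show ?thesis
    using is_matching_exchange_maximal_arc card_covered[OF _ n] M
    by (simp add: matchings_def)
qed

lemma exchange_maximal_arc_shifts:
  assumes "cyc n (Suc p) \<in> covered n N \<longleftrightarrow> cyc n (p + Suc L) \<notin> covered n N"
  shows "exchange M N (arc n p L) \<in> matchings n (card M)"
    and "\<exists>w\<in>covered n N. covered n (exchange M N (arc n p L)) - covered n M = {w}"
proof -
  let ?M' = "exchange M N (arc n p L)"
  obtain w w' where ends: "{w, w'} = {cyc n (Suc p), cyc n (p + Suc L)}"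
    and w: "w \<in> covered n N" "w' \<notin> covered n N"
    using assms by (cases "cyc n (Suc p) \<in> covered n N") (auto simp: insert_commute)
  have w_M: "w \<notin> covered n M" "w' \<in> covered n M"
    using ends w covered_maximal_arc_ends_iff by (auto simp: doubleton_eq_iff)
  then have cov: "covered n ?M' = insert w (covered n M - {w'})"
    using ends w covered_exchange_maximal_arc by auto
  then have diff: "covered n ?M' - covered n M = {w}" using w_M by auto
  have "card (covered n ?M') = Suc (card (covered n M - {w'}))"
    using cov w_M finite_covered[OF M] by simp
  also have "\<dots> = card (covered n M)"
    using finite_covered[OF M] w_M(2) by (rule card_Suc_Diff1)
  finally show "?M' \<in> matchings n (card M)"
    using is_matching_exchange_maximal_arc card_covered[OF _ n] M
    by (simp add: matchings_def)
  show "\<exists>w\<in>covered n N. covered n ?M' - covered n M = {w}" using w(1) diff by blast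
qed

end

section \<open>The exchange lemma\<close>

lemma Min_less_Min_if_Min_sym_diff:
  fixes S T :: "'a::linorder set"
  assumes "finite S" "finite T" "T \<noteq> {}" "Min S \<noteq> Min T" "Min (sym_diff S T) \<in> S"
  shows "Min S < Min T"
proof (rule ccontr)
  assume "\<not> Min S < Min T"
  then have "Min T < Min S" using assms(4) by simp
  then have "Min T \<notin> S" using assms(1) Min_le leD by blast
  then have "Min T \<in> sym_diff S T" using Min_in assms(2,3) by blast
  then have "Min (sym_diff S T) \<le> Min T" using assms(1,2) by (intro Min_le) auto
  moreover have "Min S \<le> Min (sym_diff S T)" using assms(1,5) by simp
  ultimately show False using \<open>Min T < Min S\<close> by simp
qed

lemma sorted_list_of_set_less_if_Min_sym_diff:
  fixes S T :: "'a::linorder set"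
  assumes "finite S" "finite T" "card S = card T" "S \<noteq> T" "Min (sym_diff S T) \<in> S"
  shows "sorted_list_of_set S < sorted_list_of_set T"
  using assms
proof (induction "card S" arbitrary: S T)
  case 0
  then show ?case by simp
next
  case (Suc k)
  then have "S \<noteq> {}" "T \<noteq> {}" by auto
  let ?m = "Min (sym_diff S T)"
  have sorted: "sorted_list_of_set S = Min S # sorted_list_of_set (S - {Min S})"
    "sorted_list_of_set T = Min T # sorted_list_of_set (T - {Min T})"
    using Suc.prems(1,2) \<open>S \<noteq> {}\<close> \<open>T \<noteq> {}\<close> by (simp_all add: sorted_list_of_set_nonempty)
  have "finite (sym_diff S T)" using Suc.prems(1,2) by simp
  moreover have "sym_diff S T \<noteq> {}" using Suc.prems(4) by blast
  ultimately have "?m \<in> sym_diff S T" by (rule Min_in)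
  show ?case
  proof (cases "Min S = Min T")
    case True
    let ?S = "S - {Min S}" and ?T = "T - {Min S}"
    have "Min S \<in> S" "Min S \<in> T"
      using True Min_in Suc.prems(1,2) \<open>S \<noteq> {}\<close> \<open>T \<noteq> {}\<close> by metis+
    then have "sym_diff ?S ?T = sym_diff S T" "?S \<noteq> ?T" "card ?S = card ?T" "k = card ?S"
      using Suc.prems Suc.hyps(2) by auto
    then have "sorted_list_of_set ?S < sorted_list_of_set ?T"
      using Suc.hyps(1)[of ?S ?T] Suc.prems \<open>?m \<in> sym_diff S T\<close> by auto
    then show ?thesis using sorted True by simp
  next
    case False
    then have "Min S < Min T"
      using Min_less_Min_if_Min_sym_diff Suc.prems(1,2,5) \<open>T \<noteq> {}\<close> by blast
    then show ?thesis using sorted by simp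
  qed
qed

lemma Min_sym_diff_mem_if_sorted_list_of_set_less:
  fixes S T :: "'a::linorder set"
  assumes "finite S" "finite T" "card S = card T" "sorted_list_of_set S < sorted_list_of_set T"
  shows "Min (sym_diff S T) \<in> S"
proof (rule ccontr)
  assume "Min (sym_diff S T) \<notin> S"
  moreover have "S \<noteq> T" using assms(4) by auto
  then have "Min (sym_diff S T) \<in> sym_diff S T" using assms(1,2) by (intro Min_in) auto
  ultimately have "Min (sym_diff T S) \<in> T" by (simp add: Un_commute)
  then have "sorted_list_of_set T < sorted_list_of_set S"
    using sorted_list_of_set_less_if_Min_sym_diff assms(1-3) \<open>S \<noteq> T\<close> by metis
  then show False using assms(4) by simp
qed

lemma sorted_list_of_set_exchange_less:
  fixes M N P :: "'a::linorder set"
  assumes "finite M" "finite N" "card (exchange M N P) = card M" "P \<subseteq> sym_diff M N"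
    and "a \<in> P" "a \<in> N" "a = Min (sym_diff M N)"
  shows "sorted_list_of_set (exchange M N P) < sorted_list_of_set M"
proof (rule sorted_list_of_set_less_if_Min_sym_diff)
  have "sym_diff (exchange M N P) M = P" using assms(4) by (auto simp: exchange_def)
  moreover have "Min P = a"
    using assms(1,2,4,5,7) by (intro Min_eqI) (auto intro: finite_subset)
  ultimately show "Min (sym_diff (exchange M N P) M) \<in> exchange M N P"
    using assms(5,6) by (simp add: exchange_def)
  show "exchange M N P \<noteq> M" using assms(4-6) by (auto simp: exchange_def)
qed (use assms in \<open>auto simp: exchange_def\<close>)

lemma maximal_arc_through_Min_sym_diff:
  assumes n: "2 \<le> n" and M: "is_matching n M" and N: "is_matching n N"
    and cov: "covered n M \<noteq> covered n N"
  obtains p L where "is_maximal_arc n (sym_diff M N) p L" "Min (sym_diff M N) \<in> arc n p L"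
proof -
  have D: "sym_diff M N \<subseteq> {1..n}"
    using is_matching_subset[OF M] is_matching_subset[OF N] by blast
  then have "finite (sym_diff M N)" using finite_subset by blast
  moreover have "sym_diff M N \<noteq> {}" using cov by auto
  ultimately have "Min (sym_diff M N) \<in> sym_diff M N" by (rule Min_in)
  moreover obtain x where "x \<in> {1..n}" "x \<notin> sym_diff M N"
    using covered_eq_if_sym_diff_full[OF n M N] cov by blast
  ultimately show ?thesis using maximal_arc_through[of n "sym_diff M N"] n D that by auto
qed

lemma matching_exchange:
  assumes n: "2 \<le> n" and M: "M \<in> matchings n k" and N: "N \<in> matchings n k"
    and cov: "covered n M \<noteq> covered n N"
    and less: "sorted_list_of_set N < sorted_list_of_set M"
  shows "(\<exists>Q\<in>matchings n (Suc k). covered n Q \<subseteq> covered n M \<union> covered n N)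
    \<or> (\<exists>M'\<in>matchings n k. sorted_list_of_set M' < sorted_list_of_set M
         \<and> (\<exists>w\<in>covered n N. covered n M' - covered n M = {w}))"
proof -
  have Mm: "is_matching n M" "card M = k" and Nm: "is_matching n N" "card N = k"
    using M N by (auto simp: matchings_def)
  have fin: "finite M" "finite N"
    using is_matching_subset[OF Mm(1)] is_matching_subset[OF Nm(1)] finite_subset by auto
  obtain p L where A: "is_maximal_arc n (sym_diff M N) p L" "Min (sym_diff M N) \<in> arc n p L"
    using maximal_arc_through_Min_sym_diff[OF n Mm(1) Nm(1) cov] by blast
  define a where "a = Min (sym_diff M N)"
  have "a \<in> N"
    using Min_sym_diff_mem_if_sorted_list_of_set_less[OF fin(2,1)] Nm(2) Mm(2) less
    unfolding a_def by (simp add: Un_commute)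
  consider "{cyc n (Suc p), cyc n (p + Suc L)} \<subseteq> covered n N"
    | "{cyc n (Suc p), cyc n (p + Suc L)} \<subseteq> covered n M"
    | "cyc n (Suc p) \<in> covered n N \<longleftrightarrow> cyc n (p + Suc L) \<notin> covered n N"
    using covered_maximal_arc_ends_iff[OF n Mm(1) Nm(1) A(1)] by blast
  then show ?thesis
  proof cases
    case 1
    then have "exchange M N (arc n p L) \<in> matchings n (Suc k)"
      using exchange_maximal_arc_grows[OF n Mm(1) Nm(1) A(1)] Mm(2) by simp
    then show ?thesis using covered_exchange_subset by blast
  next
    case 2
    have "is_maximal_arc n (sym_diff N M) p L" using A(1) by (simp add: Un_commute)
    then have "exchange N M (arc n p L) \<in> matchings n (Suc k)"
      using exchange_maximal_arc_grows[OF n Nm(1) Mm(1)] 2 Nm(2) by simp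
    then show ?thesis using covered_exchange_subset by blast
  next
    case 3
    note shift = exchange_maximal_arc_shifts[OF n Mm(1) Nm(1) A(1) 3]
    have "arc n p L \<subseteq> sym_diff M N" using A(1) by (simp add: is_maximal_arc_def)
    then have "sorted_list_of_set (exchange M N (arc n p L)) < sorted_list_of_set M"
      using sorted_list_of_set_exchange_less[OF fin] shift(1) A(2) \<open>a \<in> N\<close> a_def
      by (simp add: matchings_def)
    then show ?thesis using shift Mm(2) by blast
  qed
qed

section \<open>Squarefree powers and their colon ideals\<close>

lemma mset_set_subseteq_iff: "finite X \<Longrightarrow> mset_set X \<subseteq># u \<longleftrightarrow> X \<subseteq> set_mset u"
proof
  assume "finite X" "X \<subseteq> set_mset u"
  then have "mset_set X \<subseteq># mset_set (set_mset u)" by simp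
  also have "\<dots> \<subseteq># u" by (rule mset_set_set_mset_msubset)
  finally show "mset_set X \<subseteq># u" .
qed (use set_mset_mono in fastforce)

lemma mset_set_Diff_mset_set:
  "finite A \<Longrightarrow> finite B \<Longrightarrow> mset_set A - mset_set B = mset_set (A - B)"
  by (rule multiset_eqI) (simp add: count_mset_set')

lemma mprod_in_monoms: "is_matching n M \<Longrightarrow> mprod n M \<in> monoms n"
  using finite_covered covered_subset[OF is_matching_subset]
  by (simp add: monoms_def mprod_eq_mset_set_covered)

lemma set_mset_mprod: "is_matching n M \<Longrightarrow> set_mset (mprod n M) = covered n M"
  using finite_covered by (simp add: mprod_eq_mset_set_covered)

lemma mingens_sqpow:
  assumes "2 \<le> n"
  shows "mingens (sqpow n k) = mprod n ` matchings n k"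
proof -
  have mon: "mprod n M \<in> monoms n" if "M \<in> matchings n k" for M
    using that mprod_in_monoms by (simp add: matchings_def)
  have size: "size (mprod n M) = 2 * k" if "M \<in> matchings n k" for M
    using that card_covered[OF _ assms] finite_covered
    by (simp add: matchings_def mprod_eq_mset_set_covered)
  have sqpow: "sqpow n k = {u \<in> monoms n. \<exists>M\<in>matchings n k. mprod n M \<subseteq># u}"
    unfolding sqpow_def mideal_def by blast
  show ?thesis
  proof (intro equalityI subsetI)
    fix u assume u: "u \<in> mingens (sqpow n k)"
    then obtain M where "M \<in> matchings n k" "mprod n M \<subseteq># u"
      unfolding mingens_def sqpow by blast
    moreover from this have "mprod n M \<in> sqpow n k" using mon sqpow by blast
    ultimately show "u \<in> mprod n ` matchings n k" using u unfolding mingens_def by blast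
  next
    fix u assume "u \<in> mprod n ` matchings n k"
    then obtain M where M: "M \<in> matchings n k" "u = mprod n M" by blast
    have "v = u" if v: "v \<in> sqpow n k" "v \<subseteq># u" for v
    proof -
      obtain M' where M': "M' \<in> matchings n k" "mprod n M' \<subseteq># v"
        using v(1) unfolding sqpow_def mideal_def by blast
      have sub: "mprod n M' \<subseteq># u" using M'(2) v(2) by (rule subset_mset.order_trans)
      have "mprod n M' = u"
      proof (rule ccontr)
        assume "mprod n M' \<noteq> u"
        with sub have "mprod n M' \<subset># u" by (rule subset_mset.le_neq_trans)
        then have "size (mprod n M') < size u" by (rule mset_subset_size)
        then show False using size[OF M'(1)] size[OF M(1)] M(2) by simp
      qed
      then show ?thesis using v(2) M'(2) by simp
    qed
    then show "u \<in> mingens (sqpow n k)" unfolding mingens_def sqpow using M mon by blast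
  qed
qed

lemma mcolon_mideal_singleton: "y \<in> monoms n \<Longrightarrow> mcolon n (mideal n {x}) y = mideal n {x - y}"
  by (auto simp: mcolon_def mideal_def monoms_def subset_eq_diff_conv)

lemma mcolon_subset_mcolon_sqpow:
  assumes "Q \<in> matchings n q" "is_matching n M" "is_matching n N"
    and "covered n Q \<subseteq> covered n M \<union> covered n N"
  shows "mcolon n (mideal n {mprod n N}) (mprod n M) \<subseteq> mcolon n (sqpow n q) (mprod n M)"
proof
  fix g assume "g \<in> mcolon n (mideal n {mprod n N}) (mprod n M)"
  then have g: "g \<in> monoms n" "g + mprod n M \<in> monoms n" "mprod n N \<subseteq># g + mprod n M"
    unfolding mcolon_def mideal_def by auto
  have "set_mset (mprod n N) \<subseteq> set_mset (g + mprod n M)" using g(3) by (rule set_mset_mono)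
  then have "covered n Q \<subseteq> set_mset (g + mprod n M)"
    using assms(4) set_mset_mprod[OF assms(2)] set_mset_mprod[OF assms(3)] by auto
  moreover have "finite (covered n Q)" using assms(1) finite_covered by (auto simp: matchings_def)
  ultimately have "mprod n Q \<subseteq># g + mprod n M"
    unfolding mprod_eq_mset_set_covered[of n Q] using mset_set_subseteq_iff by blast
  then show "g \<in> mcolon n (sqpow n q) (mprod n M)"
    using g assms(1) unfolding mcolon_def sqpow_def mideal_def by blast
qed

lemma mcolon_mprod_eq_variable:
  assumes "is_matching n M" "is_matching n M'" "is_matching n N"
    and "w \<in> covered n N" "covered n M' - covered n M = {w}"
  shows "mcolon n (mideal n {mprod n M'}) (mprod n M) = mideal n {{#w#}}"
    and "mcolon n (mideal n {mprod n N}) (mprod n M) \<subseteq> mideal n {{#w#}}"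
proof -
  note fin = finite_covered[OF assms(1)] finite_covered[OF assms(2)] finite_covered[OF assms(3)]
  note colon = mcolon_mideal_singleton[OF mprod_in_monoms[OF assms(1)]]
  show "mcolon n (mideal n {mprod n M'}) (mprod n M) = mideal n {{#w#}}"
    using colon fin assms(5) by (simp add: mprod_eq_mset_set_covered mset_set_Diff_mset_set)
  have "{#w#} \<subseteq># mprod n N - mprod n M"
    using fin assms(4,5) by (auto simp: mprod_eq_mset_set_covered mset_set_Diff_mset_set)
  then have "mideal n {mprod n N - mprod n M} \<subseteq> mideal n {{#w#}}"
    unfolding mideal_def by (auto dest: mset_subset_eqD)
  then show "mcolon n (mideal n {mprod n N}) (mprod n M) \<subseteq> mideal n {{#w#}}"
    by (simp only: colon)
qed

lemma mcolon_mprod_dichotomy: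
  assumes n: "2 \<le> n" and M: "M \<in> matchings n k" and N: "N \<in> matchings n k"
    and "covered n M \<noteq> covered n N" "sorted_list_of_set N < sorted_list_of_set M"
  shows "mcolon n (mideal n {mprod n N}) (mprod n M) \<subseteq> mcolon n (sqpow n (Suc k)) (mprod n M)
    \<or> (\<exists>M'\<in>matchings n k. sorted_list_of_set M' < sorted_list_of_set M
         \<and> (\<exists>w\<in>{1..n}. mcolon n (mideal n {mprod n M'}) (mprod n M) = mideal n {{#w#}})
         \<and> mcolon n (mideal n {mprod n N}) (mprod n M) \<subseteq> mcolon n (mideal n {mprod n M'}) (mprod n M))"
  using matching_exchange[OF assms]
proof
  assume "\<exists>Q\<in>matchings n (Suc k). covered n Q \<subseteq> covered n M \<union> covered n N"
  then obtain Q where "Q \<in> matchings n (Suc k)" "covered n Q \<subseteq> covered n M \<union> covered n N"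
    by blast
  moreover have "is_matching n M" "is_matching n N" using M N by (simp_all add: matchings_def)
  ultimately show ?thesis using mcolon_subset_mcolon_sqpow by blast
next
  assume "\<exists>M'\<in>matchings n k. sorted_list_of_set M' < sorted_list_of_set M
    \<and> (\<exists>w\<in>covered n N. covered n M' - covered n M = {w})"
  then obtain M' w where M': "M' \<in> matchings n k" "sorted_list_of_set M' < sorted_list_of_set M"
    and w: "w \<in> covered n N" "covered n M' - covered n M = {w}"
    by blast
  have match: "is_matching n M" "is_matching n M'" "is_matching n N"
    using M M' N by (auto simp: matchings_def)
  have "w \<in> {1..n}" using w covered_subset[OF is_matching_subset[OF match(3)]] by blast
  moreover note colon = mcolon_mprod_eq_variable[OF match w]
  ultimately show ?thesis using M' by (intro disjI2 bexI[of _ M']) auto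
qed

section \<open>Generators ordered by their least matchings\<close>

lemma lexless_iff_less: "lexless xs ys \<longleftrightarrow> xs < ys"
  by (simp add: lexless_def list_less_def)

lemma gkey_least:
  assumes "M \<in> matchings n k"
  shows "gkey n k (mprod n M) \<in>
      {sorted_list_of_set M' | M'. M' \<in> matchings n k \<and> mprod n M' = mprod n M}"
      (is "_ \<in> ?S")
    and "gkey n k (mprod n M) \<le> sorted_list_of_set M"
proof -
  have "?S \<subseteq> sorted_list_of_set ` Pow {1..n}"
    by (auto simp: matchings_def dest: is_matching_subset)
  then have fin: "finite ?S" by (rule finite_subset) simp
  moreover have "?S \<noteq> {}" using assms by blast
  ultimately have Min: "Min ?S \<in> ?S" by (rule Min_in)
  have Min_least: "Min ?S \<le> L" if "L \<in> ?S" for L using fin that by (rule Min_le)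
  have "gkey n k (mprod n M) = Min ?S" unfolding gkey_def
  proof (rule the_equality)
    have "lexless (Min ?S) L" if "L \<in> ?S" "L \<noteq> Min ?S" for L
      unfolding lexless_iff_less using Min_least[OF that(1)] that(2)[symmetric] by (rule le_neq_trans)
    then show "Min ?S \<in> ?S \<and> (\<forall>L\<in>?S. L \<noteq> Min ?S \<longrightarrow> lexless (Min ?S) L)"
      using Min by blast
  next
    fix L assume L: "L \<in> ?S \<and> (\<forall>L'\<in>?S. L' \<noteq> L \<longrightarrow> lexless L L')"
    show "L = Min ?S"
    proof (rule ccontr)
      assume "L \<noteq> Min ?S"
      then have "L < Min ?S" using L Min unfolding lexless_iff_less by auto
      then show False using Min_least L leD by blast
    qed
  qed
  then show "gkey n k (mprod n M) \<in> ?S" "gkey n k (mprod n M) \<le> sorted_list_of_set M"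
    using Min Min_least assms by auto
qed

lemma gkey_attained:
  assumes "m \<in> mprod n ` matchings n k"
  obtains M where "M \<in> matchings n k" "mprod n M = m" "gkey n k m = sorted_list_of_set M"
  using assms gkey_least(1) by blast

lemma sorted_wrt_index_less:
  fixes f :: "'a \<Rightarrow> 'b::order"
  assumes "sorted_wrt (\<lambda>a b. f a < f b) xs" "i < length xs" "j < length xs"
    and "f (xs ! i) < f (xs ! j)"
  shows "i < j"
proof (rule ccontr)
  assume "\<not> i < j"
  then consider "j < i" | "i = j" by linarith
  then show False using sorted_wrt_nth_less[OF assms(1)] assms(2-4) by cases (auto dest: order.asym)
qed

lemma index_of_smaller_matching:
  assumes "set ms = mprod n ` matchings n k" "sorted_wrt (\<lambda>a b. gkey n k a < gkey n k b) ms"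
    and "i < length ms" "M \<in> matchings n k" "sorted_list_of_set M < gkey n k (ms ! i)"
  shows "\<exists>r<i. ms ! r = mprod n M"
proof -
  obtain r where r: "r < length ms" "ms ! r = mprod n M"
    using assms(1,4) by (metis imageI in_set_conv_nth)
  have "gkey n k (ms ! r) < gkey n k (ms ! i)"
    using gkey_least(2)[OF assms(4)] assms(5) r(2) by simp
  then show ?thesis using sorted_wrt_index_less[OF assms(2) r(1) assms(3)] r(2) by blast
qed

lemma sorted_generators_matchings:
  assumes "set ms = mprod n ` matchings n k" "distinct ms"
    and "sorted_wrt (\<lambda>a b. gkey n k a < gkey n k b) ms" "i < length ms" "j < i"
  obtains Mi Mj where "Mi \<in> matchings n k" "Mj \<in> matchings n k"
    "ms ! i = mprod n Mi" "ms ! j = mprod n Mj" "gkey n k (ms ! i) = sorted_list_of_set Mi"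
    "covered n Mi \<noteq> covered n Mj" "sorted_list_of_set Mj < sorted_list_of_set Mi"
proof -
  have "ms ! i \<in> set ms" "ms ! j \<in> set ms" using assms(4,5) by simp_all
  then obtain Mi Mj
    where Mi: "Mi \<in> matchings n k" "ms ! i = mprod n Mi" "gkey n k (ms ! i) = sorted_list_of_set Mi"
      and Mj: "Mj \<in> matchings n k" "ms ! j = mprod n Mj" "gkey n k (ms ! j) = sorted_list_of_set Mj"
    unfolding assms(1) by (metis gkey_attained)
  have "ms ! i \<noteq> ms ! j" using nth_eq_iff_index_eq[OF assms(2)] assms(4,5) by simp
  then have "covered n Mi \<noteq> covered n Mj" using Mi(2) Mj(2) by (auto simp: mprod_eq_mset_set_covered)
  moreover have "sorted_list_of_set Mj < sorted_list_of_set Mi"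
    using sorted_wrt_nth_less[OF assms(3,5,4)] Mi(3) Mj(3) by simp
  ultimately show ?thesis using that Mi Mj by blast
qed

theorem lemma3p4:
  fixes n q :: nat and ms :: "nat multiset list"
  assumes "n \<ge> 3" and "q \<ge> 2" and "q - 1 \<le> n div 2"
    and "set ms = mingens (sqpow n (q - 1))"
    and "distinct ms"
    and "sorted_wrt (\<lambda>a b. lexless (gkey n (q - 1) a) (gkey n (q - 1) b)) ms"
  shows "\<forall>i < length ms. \<forall>j < i.
     mcolon n (mideal n {ms ! j}) (ms ! i) \<subseteq> mcolon n (sqpow n q) (ms ! i)
     \<or> (\<exists>r < i. (\<exists>k\<in>{1..n}. mcolon n (mideal n {ms ! r}) (ms ! i) = mideal n {{#k#}})
               \<and> mcolon n (mideal n {ms ! j}) (ms ! i) \<subseteq> mcolon n (mideal n {ms ! r}) (ms ! i))"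
proof (intro allI impI, goal_cases)
  case (1 i j)
  define k where "k = q - 1"
  have n: "2 \<le> n" and q: "q = Suc k" using assms(1,2) by (auto simp: k_def)
  have set_ms: "set ms = mprod n ` matchings n k"
    using assms(4) mingens_sqpow[OF n] by (simp add: k_def)
  have sorted_ms: "sorted_wrt (\<lambda>a b. gkey n k a < gkey n k b) ms"
    using assms(6) by (simp add: k_def lexless_iff_less)
  obtain Mi Mj
    where Mi: "Mi \<in> matchings n k" "ms ! i = mprod n Mi" "gkey n k (ms ! i) = sorted_list_of_set Mi"
    and Mj: "Mj \<in> matchings n k" "ms ! j = mprod n Mj"
    and cov: "covered n Mi \<noteq> covered n Mj" and less: "sorted_list_of_set Mj < sorted_list_of_set Mi"
    using sorted_generators_matchings[OF set_ms assms(5) sorted_ms 1] by metis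
  from mcolon_mprod_dichotomy[OF n Mi(1) Mj(1) cov less] show ?case
  proof (elim disjE bexE conjE)
    fix M' w assume M': "M' \<in> matchings n k" "sorted_list_of_set M' < sorted_list_of_set Mi"
      and colon: "w \<in> {1..n}" "mcolon n (mideal n {mprod n M'}) (mprod n Mi) = mideal n {{#w#}}"
        "mcolon n (mideal n {mprod n Mj}) (mprod n Mi) \<subseteq> mcolon n (mideal n {mprod n M'}) (mprod n Mi)"
    obtain r where "r < i" "ms ! r = mprod n M'"
      using index_of_smaller_matching[OF set_ms sorted_ms 1(1) M'(1)] M'(2) Mi(3) by auto
    then show ?case using colon Mi(2) Mj(2) by (intro disjI2 exI[of _ r]) auto
  qed (simp add: Mi(2) Mj(2) q)
qed

end
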